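(* Let a group $G$ act on a connected weighted simplicial complex $\Omega$ on $[n]$, and let $\mathcal V=\mathcal V_0\otimes\cdots\otimes\mathcal V_n$ with complex vector spaces $\mathcal V_i$ such that $\mathcal V_i=\mathcal V_j$ whenever $i,j$ lie in the same $G$-orbit. Then for all $v,w\in\mathcal V$: (i) ${\rm rank}_{(\Omega,G)}(v+w)\leq{\rm rank}_{(\Omega,G)}(v)+{\rm rank}_{(\Omega,G)}(w)$; (ii) if all $\mathcal V_i$ are algebras (and $\mathcal V$ carries the tensor product algebra structure), then ${\rm rank}_{(\Omega,G)}(vw)\leq{\rm rank}_{(\Omega,G)}(v)\cdot{\rm rank}_{(\Omega,G)}(w)$.
   Context: $[n]=\{0,\ldots,n\}$. A weighted simplicial complex (wsc) on $[n]$ is a function $\Omega\colon\mathcal P([n])\to\mathbb N=\{0,1,\ldots\}$ such that $S_1\subseteq S_2$ implies $\Omega(S_1)\mid\Omega(S_2)$; simplices are sets with $\Omega(S)\neq0$, every singleton is assumed to be a simplex, facets are inclusion-maximal simplices, $\mathcal F$ is the set of facets. $\widetilde{\mathcal F}$ is the multiset containing each facet $F$ exactly $\Omega(F)$ times, with collapse map $c\colon\widetilde{\mathcal F}\to\mathcal F$; $\widetilde{\mathcal F}_i\subseteq\widetilde{\mathcal F}$ consists of the copies of facets containing $i$. $\Omega$ is connected if any two vertices are joined by a chain of vertices in which consecutive ones lie in a common facet. A group action of $G$ on $\Omega$ is an action of $G$ on $[n]$ with $\Omega(gS)=\Omega(S)$ for all $S,g$, together with an action of $G$ on $\widetilde{\mathcal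 F}$ such that $c(gx)=gc(x)$; $g$ maps $\widetilde{\mathcal F}_i$ onto $\widetilde{\mathcal F}_{gi}$. For $\beta\colon\widetilde{\mathcal F}_i\to\mathcal I$, ${}^g\beta\colon\widetilde{\mathcal F}_{gi}\to\mathcal I$ is $x\mapsto\beta(g^{-1}x)$; $\alpha_{\mid i}$ denotes restriction of $\alpha\colon\widetilde{\mathcal F}\to\mathcal I$ to $\widetilde{\mathcal F}_i$. An $(\Omega,G)$-decomposition of $v\in\mathcal V$ consists of a finite set $\mathcal I$ and local vectors $v^{[i]}_\beta\in\mathcal V_i$ ($i\in[n]$, $\beta\in\mathcal I^{\widetilde{\mathcal F}_i}$) with (a) $v=\sum_{\alpha\in\mathcal I^{\widetilde{\mathcal F}}}v^{[0]}_{\alpha_{\mid0}}\otimes\cdots\otimes v^{[n]}_{\alpha_{\mid n}}$ and (b) $v^{[i]}_\beta=v^{[gi]}_{{}^g\beta}$ for all $i,g,\beta$. ${\rm rank}_{(\Omega,G)}(v)$ is the minimal $|\mathcal I|$ ($\infty$ if no decomposition exists, with the usual conventions for $\infty$ in sums and products). *)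

theory Defs
  imports Complex_Main "HOL-Algebra.Group_Action" "HOL-Library.Extended_Nat"
begin

text \<open>Weighted simplicial complex on [n] = {0..n}: Omega :: nat set => nat
  (only its values on subsets of {0..n} matter).\<close>
definition wsc :: "nat \<Rightarrow> (nat set \<Rightarrow> nat) \<Rightarrow> bool" where
  "wsc n \<Omega> \<longleftrightarrow>
     (\<forall>S1 S2. S1 \<subseteq> S2 \<and> S2 \<subseteq> {0..n} \<longrightarrow> \<Omega> S1 dvd \<Omega> S2) \<and>
     (\<forall>i\<in>{0..n}. \<Omega> {i} \<noteq> 0)"

definition facets :: "nat \<Rightarrow> (nat set \<Rightarrow> nat) \<Rightarrow> nat set set" where
  "facets n \<Omega> = {F. F \<subseteq> {0..n} \<and> \<Omega> F \<noteq> 0 \<and>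
      (\<forall>T. F \<subset> T \<and> T \<subseteq> {0..n} \<longrightarrow> \<Omega> T = 0)}"

text \<open>The multiset of facets: facet F occurs as the copies (F,k), k < Omega F.
  The collapse map is fst.\<close>
definition mfacets :: "nat \<Rightarrow> (nat set \<Rightarrow> nat) \<Rightarrow> (nat set \<times> nat) set" where
  "mfacets n \<Omega> = {(F, k). F \<in> facets n \<Omega> \<and> k < \<Omega> F}"

definition mfacets_at :: "nat \<Rightarrow> (nat set \<Rightarrow> nat) \<Rightarrow> nat \<Rightarrow> (nat set \<times> nat) set" where
  "mfacets_at n \<Omega> i = {x \<in> mfacets n \<Omega>. i \<in> fst x}"

definition wsc_connected :: "nat \<Rightarrow> (nat set \<Rightarrow> nat) \<Rightarrow> bool" where
  "wsc_connected n \<Omega> \<longleftrightarrow>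
     (\<forall>i\<in>{0..n}. \<forall>j\<in>{0..n}.
        (i, j) \<in> {(a, b). \<exists>F\<in>facets n \<Omega>. a \<in> F \<and> b \<in> F}\<^sup>*)"

definition wsc_action ::
  "nat \<Rightarrow> (nat set \<Rightarrow> nat) \<Rightarrow> ('g, 'm) monoid_scheme \<Rightarrow> ('g \<Rightarrow> nat \<Rightarrow> nat)
     \<Rightarrow> ('g \<Rightarrow> (nat set \<times> nat) \<Rightarrow> (nat set \<times> nat)) \<Rightarrow> bool" where
  "wsc_action n \<Omega> G \<phi> \<psi> \<longleftrightarrow>
     group_action G {0..n} \<phi> \<and>
     group_action G (mfacets n \<Omega>) \<psi> \<and>
     (\<forall>g\<in>carrier G. \<forall>S. S \<subseteq> {0..n} \<longrightarrow> \<Omega> (\<phi> g ` S) = \<Omega> S) \<and>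
     (\<forall>g\<in>carrier G. \<forall>x\<in>mfacets n \<Omega>. fst (\<psi> g x) = \<phi> g ` fst x)"

text \<open>Complex vector spaces are modelled through a basis: the local space with basis
  B is the space of finitely supported functions B -> complex.  The tensor product
  V_0 (x) ... (x) V_n is the space of finitely supported functions on the product
  of the bases (extensional tuples).\<close>
definition loc_space :: "'b set \<Rightarrow> ('b \<Rightarrow> complex) set" where
  "loc_space B = {f. finite {b. f b \<noteq> 0} \<and> {b. f b \<noteq> 0} \<subseteq> B}"

definition tensor_space :: "nat \<Rightarrow> (nat \<Rightarrow> 'b set) \<Rightarrow> ((nat \<Rightarrow> 'b) \<Rightarrow> complex) set" where
  "tensor_space n B = {v. finite {x. v x \<noteq> 0} \<and> {x. v x \<noteq> 0} \<subseteq> PiE {0..n} B}"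

definition tprod :: "nat \<Rightarrow> (nat \<Rightarrow> 'b set) \<Rightarrow> (nat \<Rightarrow> 'b \<Rightarrow> complex) \<Rightarrow> (nat \<Rightarrow> 'b) \<Rightarrow> complex" where
  "tprod n B u = (\<lambda>x. if x \<in> PiE {0..n} B then (\<Prod>i\<in>{0..n}. u i (x i)) else 0)"

definition is_decomp ::
  "nat \<Rightarrow> (nat set \<Rightarrow> nat) \<Rightarrow> ('g, 'm) monoid_scheme \<Rightarrow> ('g \<Rightarrow> nat \<Rightarrow> nat)
     \<Rightarrow> ('g \<Rightarrow> (nat set \<times> nat) \<Rightarrow> (nat set \<times> nat)) \<Rightarrow> (nat \<Rightarrow> 'b set)
     \<Rightarrow> ((nat \<Rightarrow> 'b) \<Rightarrow> complex) \<Rightarrow> nat set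
     \<Rightarrow> (nat \<Rightarrow> ((nat set \<times> nat) \<Rightarrow> nat) \<Rightarrow> 'b \<Rightarrow> complex) \<Rightarrow> bool" where
  "is_decomp n \<Omega> G \<phi> \<psi> B v I loc \<longleftrightarrow>
     finite I \<and>
     (\<forall>i\<in>{0..n}. \<forall>\<beta>\<in>mfacets_at n \<Omega> i \<rightarrow>\<^sub>E I. loc i \<beta> \<in> loc_space (B i)) \<and>
     v = (\<lambda>x. \<Sum>\<alpha>\<in>mfacets n \<Omega> \<rightarrow>\<^sub>E I.
              tprod n B (\<lambda>i. loc i (restrict \<alpha> (mfacets_at n \<Omega> i))) x) \<and>
     (\<forall>i\<in>{0..n}. \<forall>g\<in>carrier G. \<forall>\<beta>\<in>mfacets_at n \<Omega> i \<rightarrow>\<^sub>E I.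
        loc i \<beta> = loc (\<phi> g i)
           (\<lambda>x\<in>mfacets_at n \<Omega> (\<phi> g i). \<beta> (\<psi> (inv\<^bsub>G\<^esub> g) x)))"

definition decomp_rank ::
  "nat \<Rightarrow> (nat set \<Rightarrow> nat) \<Rightarrow> ('g, 'm) monoid_scheme \<Rightarrow> ('g \<Rightarrow> nat \<Rightarrow> nat)
     \<Rightarrow> ('g \<Rightarrow> (nat set \<times> nat) \<Rightarrow> (nat set \<times> nat)) \<Rightarrow> (nat \<Rightarrow> 'b set)
     \<Rightarrow> ((nat \<Rightarrow> 'b) \<Rightarrow> complex) \<Rightarrow> enat" where
  "decomp_rank n \<Omega> G \<phi> \<psi> B v =
     (INF I\<in>{I. \<exists>loc. is_decomp n \<Omega> G \<phi> \<psi> B v I loc}. enat (card I))"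

definition cplx_algebra :: "('b \<Rightarrow> complex) set \<Rightarrow> (('b \<Rightarrow> complex) \<Rightarrow> ('b \<Rightarrow> complex) \<Rightarrow> ('b \<Rightarrow> complex)) \<Rightarrow> bool" where
  "cplx_algebra S m \<longleftrightarrow>
     (\<forall>a\<in>S. \<forall>b\<in>S. m a b \<in> S) \<and>
     (\<forall>a\<in>S. \<forall>b\<in>S. \<forall>c\<in>S. m (\<lambda>x. a x + b x) c = (\<lambda>x. m a c x + m b c x)) \<and>
     (\<forall>a\<in>S. \<forall>b\<in>S. \<forall>c\<in>S. m a (\<lambda>x. b x + c x) = (\<lambda>x. m a b x + m a c x)) \<and>
     (\<forall>s. \<forall>a\<in>S. \<forall>b\<in>S. m (\<lambda>x. s * a x) b = (\<lambda>x. s * m a b x)) \<and>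
     (\<forall>s. \<forall>a\<in>S. \<forall>b\<in>S. m a (\<lambda>x. s * b x) = (\<lambda>x. s * m a b x)) \<and>
     (\<forall>a\<in>S. \<forall>b\<in>S. \<forall>c\<in>S. m (m a b) c = m a (m b c))"

definition basis_vec :: "'b \<Rightarrow> 'b \<Rightarrow> complex" where
  "basis_vec b = (\<lambda>c. if c = b then 1 else 0)"

text \<open>Tensor product algebra multiplication: bilinear extension of
  (e_y0 (x) ... (x) e_yn)(e_z0 (x) ... (x) e_zn) = (e_y0 e_z0) (x) ... (x) (e_yn e_zn).\<close>
definition tensor_mult ::
  "nat \<Rightarrow> (nat \<Rightarrow> 'b set) \<Rightarrow> (nat \<Rightarrow> ('b \<Rightarrow> complex) \<Rightarrow> ('b \<Rightarrow> complex) \<Rightarrow> ('b \<Rightarrow> complex))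
     \<Rightarrow> ((nat \<Rightarrow> 'b) \<Rightarrow> complex) \<Rightarrow> ((nat \<Rightarrow> 'b) \<Rightarrow> complex) \<Rightarrow> ((nat \<Rightarrow> 'b) \<Rightarrow> complex)" where
  "tensor_mult n B m v w = (\<lambda>x. \<Sum>y\<in>{y. v y \<noteq> 0}. \<Sum>z\<in>{z. w z \<noteq> 0}.
       v y * w z * tprod n B (\<lambda>i. m i (basis_vec (y i)) (basis_vec (z i))) x)"

end

theory Submission
  imports Defs
begin

(* A decomposition of v is a tensor network on the copies of the facets: a labelling
  alpha of all copies by indices selects at every vertex i the local vector indexed by
  the labels of the copies through i, and v is the sum over all labellings of the
  tensor products of the selected vectors.

  For v + w, take decompositions with disjoint index sets I and J and let a vertex use
  the local vector of v when all its labels lie in I, that of w when they all lie in J,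
  and 0 otherwise.  Adjacent vertices share the labels of a common facet, so on a
  connected complex a labelling survives only if it lies entirely in I or entirely in
  J; this yields v + w with |I| + |J| indices.  For vw, label by pairs of indices and
  multiply the two local vectors at every vertex; since the tensor algebra multiplies
  elementary tensors factorwise, the network contracts to vw with |I| |J| indices.
  Both constructions act on labels pointwise and hence commute with the action of G. *)

section \<open>Facets of a weighted simplicial complex\<close>

lemma facet_subset: "F \<in> facets n \<Omega> \<Longrightarrow> F \<subseteq> {0..n}"
  by (simp add: facets_def)

lemma facet_in_mfacets: "F \<in> facets n \<Omega> \<Longrightarrow> (F, 0) \<in> mfacets n \<Omega>"
  by (simp add: facets_def mfacets_def)

lemma facet_nonempty:
  assumes "wsc n \<Omega>" and "F \<in> facets n \<Omega>"
  shows "F \<noteq> {}"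
proof
  assume "F = {}"
  then have "\<Omega> {0} = 0"
    using assms(2) by (auto simp: facets_def)
  moreover have "\<Omega> {0} \<noteq> 0"
    using assms(1) by (simp add: wsc_def)
  ultimately show False
    by blast
qed

lemma finite_mfacets: "finite (mfacets n \<Omega>)"
proof -
  have "finite (facets n \<Omega>)"
    by (rule finite_subset[of _ "Pow {0..n}"]) (auto simp: facets_def)
  moreover have "mfacets n \<Omega> \<subseteq> Sigma (facets n \<Omega>) (\<lambda>F. {..<\<Omega> F})"
    by (auto simp: mfacets_def)
  ultimately show ?thesis
    by (meson finite_SigmaI finite_lessThan finite_subset)
qed

lemma simplex_subset_facet:
  assumes "S \<subseteq> {0..n}" and "\<Omega> S \<noteq> 0"
  shows "\<exists>F\<in>facets n \<Omega>. S \<subseteq> F"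
proof -
  define C where "C = {T. T \<subseteq> {0..n} \<and> S \<subseteq> T \<and> \<Omega> T \<noteq> 0}"
  have "finite C"
    by (rule finite_subset[of _ "Pow {0..n}"]) (auto simp: C_def)
  moreover have "S \<in> C"
    using assms by (simp add: C_def)
  ultimately obtain F where F: "F \<in> C" and maximal: "\<And>T. T \<in> C \<Longrightarrow> F \<subseteq> T \<Longrightarrow> F = T"
    using finite_has_maximal[of C] by blast
  have "\<Omega> T = 0" if "F \<subset> T" and "T \<subseteq> {0..n}" for T
  proof (rule ccontr)
    assume "\<Omega> T \<noteq> 0"
    then have "T \<in> C"
      using F that by (auto simp: C_def)
    then show False
      using maximal[of T] that(1) by blast
  qed
  then have "F \<in> facets n \<Omega>"
    using F by (simp add: facets_def C_def)
  then show ?thesis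
    using F by (auto simp: C_def)
qed

lemma mfacets_at_nonempty:
  assumes "wsc n \<Omega>" and "i \<in> {0..n}"
  shows "mfacets_at n \<Omega> i \<noteq> {}"
proof -
  obtain F where F: "F \<in> facets n \<Omega>" "{i} \<subseteq> F"
    using simplex_subset_facet[of "{i}" n \<Omega>] assms by (auto simp: wsc_def)
  then have "(F, 0) \<in> mfacets_at n \<Omega> i"
    using facet_in_mfacets by (simp add: mfacets_at_def)
  then show ?thesis
    by blast
qed

lemma mfacets_nonempty: "wsc n \<Omega> \<Longrightarrow> mfacets n \<Omega> \<noteq> {}"
  using mfacets_at_nonempty[of n \<Omega> 0] by (auto simp: mfacets_at_def)

lemma mfacets_at_subset: "mfacets_at n \<Omega> i \<subseteq> mfacets n \<Omega>"
  by (auto simp: mfacets_at_def)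

lemma restrict_mfacets_at_PiE:
  "\<alpha> \<in> mfacets n \<Omega> \<rightarrow>\<^sub>E I \<Longrightarrow> restrict \<alpha> (mfacets_at n \<Omega> i) \<in> mfacets_at n \<Omega> i \<rightarrow>\<^sub>E I"
  using mfacets_at_subset by fastforce

lemma wsc_connected_all_or_none:
  assumes wsc: "wsc n \<Omega>" and conn: "wsc_connected n \<Omega>"
    and local: "\<And>i. i \<in> {0..n} \<Longrightarrow>
      (\<forall>y\<in>mfacets_at n \<Omega> i. P y) \<or> (\<forall>y\<in>mfacets_at n \<Omega> i. \<not> P y)"
  shows "(\<forall>y\<in>mfacets n \<Omega>. P y) \<or> (\<forall>y\<in>mfacets n \<Omega>. \<not> P y)"
proof (rule ccontr)
  assume "\<not> ?thesis"
  then obtain y1 y2 where y1: "y1 \<in> mfacets n \<Omega>" "P y1" and y2: "y2 \<in> mfacets n \<Omega>" "\<not> P y2"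
    by blast
  have facets: "fst y1 \<in> facets n \<Omega>" "fst y2 \<in> facets n \<Omega>"
    using y1(1) y2(1) by (auto simp: mfacets_def)
  obtain i j where i: "i \<in> fst y1" and j: "j \<in> fst y2"
    using facet_nonempty[OF wsc facets(1)] facet_nonempty[OF wsc facets(2)] by blast
  have vertices: "i \<in> {0..n}" "j \<in> {0..n}"
    using i j facet_subset[OF facets(1)] facet_subset[OF facets(2)] by blast+
  let ?E = "{(a, b). \<exists>F\<in>facets n \<Omega>. a \<in> F \<and> b \<in> F}"
  have "(i, j) \<in> ?E\<^sup>*"
    using conn vertices by (simp add: wsc_connected_def)
  then have "j \<in> {0..n} \<and> (\<forall>y\<in>mfacets_at n \<Omega> j. P y)"
  proof (induction rule: rtrancl_induct)
    case base
    have "y1 \<in> mfacets_at n \<Omega> i"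
      using y1(1) i by (simp add: mfacets_at_def)
    then show ?case
      using local[of i] vertices y1(2) by blast
  next
    case (step a b)
    then obtain F where F: "F \<in> facets n \<Omega>" "a \<in> F" "b \<in> F"
      by blast
    then have "(F, 0) \<in> mfacets_at n \<Omega> a" "(F, 0) \<in> mfacets_at n \<Omega> b" "b \<in> {0..n}"
      using facet_in_mfacets[of F n \<Omega>] facet_subset[of F n \<Omega>] by (auto simp: mfacets_at_def)
    then show ?case
      using step.IH local[of b] by blast
  qed
  moreover have "y2 \<in> mfacets_at n \<Omega> j"
    using y2(1) j by (simp add: mfacets_at_def)
  ultimately show False
    using y2(2) by blast
qed

section \<open>Local spaces and the tensor product algebra\<close>

definition supp :: "('a \<Rightarrow> complex) \<Rightarrow> 'a set" where
  "supp f = {x. f x \<noteq> 0}"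

lemma loc_space_iff: "u \<in> loc_space X \<longleftrightarrow> finite (supp u) \<and> supp u \<subseteq> X"
  by (simp add: loc_space_def supp_def)

lemma loc_space_zero: "(\<lambda>_. 0) \<in> loc_space X"
  by (simp add: loc_space_def)

lemma loc_space_add:
  assumes "a \<in> loc_space X" and "b \<in> loc_space X"
  shows "(\<lambda>x. a x + b x) \<in> loc_space X"
proof -
  have "supp (\<lambda>x. a x + b x) \<subseteq> supp a \<union> supp b"
    by (auto simp: supp_def)
  then show ?thesis
    using assms by (auto simp: loc_space_iff intro: finite_subset)
qed

lemma loc_space_scale:
  assumes "a \<in> loc_space X"
  shows "(\<lambda>x. c * a x) \<in> loc_space X"
proof -
  have "supp (\<lambda>x. c * a x) \<subseteq> supp a"
    by (auto simp: supp_def)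
  then show ?thesis
    using assms by (auto simp: loc_space_iff intro: finite_subset)
qed

lemma loc_space_lincomb:
  assumes "finite A" and "\<And>a. a \<in> A \<Longrightarrow> f a \<in> loc_space X"
  shows "(\<lambda>x. \<Sum>a\<in>A. c a * f a x) \<in> loc_space X"
  using assms
proof (induction A rule: finite_induct)
  case empty
  then show ?case
    by (simp add: loc_space_zero)
next
  case (insert a A)
  then show ?case
    using loc_space_add[OF loc_space_scale[of "f a" X "c a"]] by simp
qed

lemma basis_vec_in_loc_space: "b \<in> X \<Longrightarrow> basis_vec b \<in> loc_space X"
  by (simp add: loc_space_def basis_vec_def)

lemma loc_space_basis_expansion:
  assumes "u \<in> loc_space X"
  shows "u = (\<lambda>x. \<Sum>a\<in>supp u. u a * basis_vec a x)"
proof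
  fix x
  have "(\<Sum>a\<in>supp u. u a * basis_vec a x) = (\<Sum>a\<in>supp u. if a = x then u x else 0)"
    by (rule sum.cong) (auto simp: basis_vec_def)
  also have "\<dots> = u x"
    using assms by (simp add: loc_space_iff supp_def)
  finally show "u x = (\<Sum>a\<in>supp u. u a * basis_vec a x)"
    by simp
qed

lemma cplx_algebra_opposite: "cplx_algebra S m \<Longrightarrow> cplx_algebra S (\<lambda>a b. m b a)"
  by (simp add: cplx_algebra_def)

lemma cplx_algebra_lincomb_left:
  assumes alg: "cplx_algebra (loc_space X) m"
    and "finite A" and "\<And>a. a \<in> A \<Longrightarrow> f a \<in> loc_space X" and b: "b \<in> loc_space X"
  shows "m (\<lambda>x. \<Sum>a\<in>A. c a * f a x) b = (\<lambda>x. \<Sum>a\<in>A. c a * m (f a) b x)"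
  using assms(2,3)
proof (induction A rule: finite_induct)
  case empty
  have "m (\<lambda>x. 0 * b x) b = (\<lambda>x. 0 * m b b x)"
    using alg b by (simp only: cplx_algebra_def)
  then show ?case
    by simp
next
  case (insert a A)
  have fa: "f a \<in> loc_space X"
    using insert.prems by simp
  have rest: "(\<lambda>x. \<Sum>a\<in>A. c a * f a x) \<in> loc_space X"
    using insert.prems by (intro loc_space_lincomb[OF insert.hyps(1)]) simp
  have "m (\<lambda>x. \<Sum>a\<in>insert a A. c a * f a x) b
      = m (\<lambda>x. c a * f a x + (\<Sum>a\<in>A. c a * f a x)) b"
    using insert.hyps by simp
  also have "\<dots> = (\<lambda>x. m (\<lambda>x. c a * f a x) b x + m (\<lambda>x. \<Sum>a\<in>A. c a * f a x) b x)"
    using alg loc_space_scale[OF fa] rest b by (simp add: cplx_algebra_def)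
  also have "\<dots> = (\<lambda>x. c a * m (f a) b x + (\<Sum>a\<in>A. c a * m (f a) b x))"
    using alg fa b insert.IH insert.prems by (simp add: cplx_algebra_def)
  finally show ?case
    using insert.hyps by simp
qed

lemma cplx_algebra_lincomb_right:
  assumes "cplx_algebra (loc_space X) m"
    and "finite A" and "\<And>a. a \<in> A \<Longrightarrow> f a \<in> loc_space X" and "b \<in> loc_space X"
  shows "m b (\<lambda>x. \<Sum>a\<in>A. c a * f a x) = (\<lambda>x. \<Sum>a\<in>A. c a * m b (f a) x)"
  using cplx_algebra_lincomb_left[OF cplx_algebra_opposite[OF assms(1)] assms(2-4)] .

lemma cplx_algebra_basis_expansion:
  assumes alg: "cplx_algebra (loc_space X) m" and u: "u \<in> loc_space X" and u': "u' \<in> loc_space X"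
  shows "m u u' x = (\<Sum>a\<in>supp u. \<Sum>b\<in>supp u'. u a * u' b * m (basis_vec a) (basis_vec b) x)"
proof -
  have fin: "finite (supp u)" "finite (supp u')"
    using u u' by (simp_all add: loc_space_iff)
  have basis: "basis_vec a \<in> loc_space X" if "a \<in> supp u \<union> supp u'" for a
    using that u u' by (intro basis_vec_in_loc_space) (auto simp: loc_space_iff)
  have "m u u' = m (\<lambda>x. \<Sum>a\<in>supp u. u a * basis_vec a x) u'"
    using loc_space_basis_expansion[OF u] by simp
  also have "\<dots> = (\<lambda>x. \<Sum>a\<in>supp u. u a * m (basis_vec a) u' x)"
    using cplx_algebra_lincomb_left[OF alg fin(1) _ u'] basis by blast
  finally have "m u u' x = (\<Sum>a\<in>supp u. u a * m (basis_vec a) u' x)"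
    by simp
  moreover have "m (basis_vec a) u' x = (\<Sum>b\<in>supp u'. u' b * m (basis_vec a) (basis_vec b) x)"
    if "a \<in> supp u" for a
  proof -
    have "m (basis_vec a) u' = m (basis_vec a) (\<lambda>x. \<Sum>b\<in>supp u'. u' b * basis_vec b x)"
      using loc_space_basis_expansion[OF u'] by simp
    also have "\<dots> = (\<lambda>x. \<Sum>b\<in>supp u'. u' b * m (basis_vec a) (basis_vec b) x)"
      using cplx_algebra_lincomb_right[OF alg fin(2)] basis that by blast
    finally show ?thesis
      by simp
  qed
  ultimately show ?thesis
    by (simp add: sum_distrib_left mult.assoc)
qed

lemma tprod_cong: "(\<And>i. i \<in> {0..n} \<Longrightarrow> u i = u' i) \<Longrightarrow> tprod n B u = tprod n B u'"
  unfolding tprod_def by (intro ext) (auto intro!: prod.cong)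

lemma tprod_eq_0:
  assumes "i \<in> {0..n}" and "u i = (\<lambda>_. 0)"
  shows "tprod n B u = (\<lambda>_. 0)"
  using assms unfolding tprod_def by (intro ext) (auto intro!: prod_zero bexI[where x = i])

lemma supp_tprod:
  "supp (tprod n B u) \<subseteq> (\<Pi>\<^sub>E i\<in>{0..n}. supp (u i))"
proof
  fix y
  assume "y \<in> supp (tprod n B u)"
  then have y: "y \<in> (\<Pi>\<^sub>E i\<in>{0..n}. B i)" and "(\<Prod>i\<in>{0..n}. u i (y i)) \<noteq> 0"
    by (auto simp: supp_def tprod_def split: if_splits)
  then have "u i (y i) \<noteq> 0" if "i \<in> {0..n}" for i
    using that by (meson finite_atLeastAtMost prod_zero)
  then show "y \<in> (\<Pi>\<^sub>E i\<in>{0..n}. supp (u i))"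
    using y by (auto simp: supp_def PiE_iff)
qed

lemma finite_supp_tprod:
  assumes "\<And>i. i \<in> {0..n} \<Longrightarrow> u i \<in> loc_space (B i)"
  shows "finite (supp (tprod n B u))"
  using assms by (intro finite_subset[OF supp_tprod] finite_PiE) (auto simp: loc_space_iff)

lemma tensor_mult_eq_sum:
  assumes "finite S" "supp v \<subseteq> S" "finite T" "supp w \<subseteq> T"
  shows "tensor_mult n B m v w x
    = (\<Sum>y\<in>S. \<Sum>z\<in>T. v y * w z * tprod n B (\<lambda>i. m i (basis_vec (y i)) (basis_vec (z i))) x)"
proof -
  let ?P = "\<lambda>y z. tprod n B (\<lambda>i. m i (basis_vec (y i)) (basis_vec (z i))) x"
  have "tensor_mult n B m v w x = (\<Sum>y\<in>supp v. \<Sum>z\<in>supp w. v y * w z * ?P y z)"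
    by (simp add: tensor_mult_def supp_def)
  also have "\<dots> = (\<Sum>y\<in>S. \<Sum>z\<in>supp w. v y * w z * ?P y z)"
    using assms by (intro sum.mono_neutral_left) (auto simp: supp_def)
  also have "\<dots> = (\<Sum>y\<in>S. \<Sum>z\<in>T. v y * w z * ?P y z)"
    using assms by (intro sum.cong sum.mono_neutral_left) (auto simp: supp_def)
  finally show ?thesis .
qed

lemma tensor_mult_sum:
  assumes "finite A" and "finite C"
    and "\<And>a. a \<in> A \<Longrightarrow> finite (supp (f a))" and "\<And>c. c \<in> C \<Longrightarrow> finite (supp (g c))"
  shows "tensor_mult n B m (\<lambda>y. \<Sum>a\<in>A. f a y) (\<lambda>z. \<Sum>c\<in>C. g c z) x
       = (\<Sum>a\<in>A. \<Sum>c\<in>C. tensor_mult n B m (f a) (g c) x)"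
proof -
  define S where "S = (\<Union>a\<in>A. supp (f a))"
  define T where "T = (\<Union>c\<in>C. supp (g c))"
  define P where "P y z = tprod n B (\<lambda>i. m i (basis_vec (y i)) (basis_vec (z i))) x" for y z
  have fin: "finite S" "finite T"
    using assms by (simp_all add: S_def T_def)
  have "supp (\<lambda>y. \<Sum>a\<in>A. f a y) \<subseteq> S" "supp (\<lambda>z. \<Sum>c\<in>C. g c z) \<subseteq> T"
    by (auto simp: S_def T_def supp_def dest: sum.not_neutral_contains_not_neutral)
  then have "tensor_mult n B m (\<lambda>y. \<Sum>a\<in>A. f a y) (\<lambda>z. \<Sum>c\<in>C. g c z) x
     = (\<Sum>y\<in>S. \<Sum>z\<in>T. (\<Sum>a\<in>A. f a y) * (\<Sum>c\<in>C. g c z) * P y z)"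
    unfolding P_def using fin by (intro tensor_mult_eq_sum)
  also have "\<dots> = (\<Sum>y\<in>S. \<Sum>z\<in>T. \<Sum>a\<in>A. \<Sum>c\<in>C. f a y * g c z * P y z)"
    by (simp add: sum_distrib_left sum_distrib_right mult.assoc sum.swap[of _ C A])
  also have "\<dots> = (\<Sum>a\<in>A. \<Sum>c\<in>C. \<Sum>y\<in>S. \<Sum>z\<in>T. f a y * g c z * P y z)"
    by (subst sum.swap, subst (2) sum.swap, subst (3) sum.swap, subst (2) sum.swap) (rule refl)
  also have "\<dots> = (\<Sum>a\<in>A. \<Sum>c\<in>C. tensor_mult n B m (f a) (g c) x)"
    unfolding P_def using fin by (intro sum.cong refl tensor_mult_eq_sum[symmetric]) (auto simp: S_def T_def)
  finally show ?thesis .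
qed

lemma tensor_mult_tprod:
  assumes alg: "\<And>i. i \<in> {0..n} \<Longrightarrow> cplx_algebra (loc_space (B i)) (m i)"
    and u: "\<And>i. i \<in> {0..n} \<Longrightarrow> u i \<in> loc_space (B i)"
    and u': "\<And>i. i \<in> {0..n} \<Longrightarrow> u' i \<in> loc_space (B i)"
  shows "tensor_mult n B m (tprod n B u) (tprod n B u') = tprod n B (\<lambda>i. m i (u i) (u' i))"
proof
  fix x
  define Y where "Y = (\<Pi>\<^sub>E i\<in>{0..n}. supp (u i))"
  define Z where "Z = (\<Pi>\<^sub>E i\<in>{0..n}. supp (u' i))"
  have fin: "\<And>i. i \<in> {0..n} \<Longrightarrow> finite (supp (u i)) \<and> finite (supp (u' i))"
    using u u' by (simp add: loc_space_iff)
  have YZ: "Y \<subseteq> (\<Pi>\<^sub>E i\<in>{0..n}. B i)" "Z \<subseteq> (\<Pi>\<^sub>E i\<in>{0..n}. B i)"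
    using u u' unfolding Y_def Z_def loc_space_iff by (meson PiE_mono atLeastAtMost_iff)+
  have expand: "tensor_mult n B m (tprod n B u) (tprod n B u') x = (\<Sum>y\<in>Y. \<Sum>z\<in>Z.
      tprod n B u y * tprod n B u' z * tprod n B (\<lambda>i. m i (basis_vec (y i)) (basis_vec (z i))) x)"
    using fin supp_tprod[of n B u] supp_tprod[of n B u']
    by (intro tensor_mult_eq_sum) (auto simp: Y_def Z_def intro!: finite_PiE)
  show "tensor_mult n B m (tprod n B u) (tprod n B u') x = tprod n B (\<lambda>i. m i (u i) (u' i)) x"
  proof (cases "x \<in> (\<Pi>\<^sub>E i\<in>{0..n}. B i)")
    case False
    then show ?thesis
      unfolding expand by (simp add: tprod_def)
  next
    case True
    define H where "H i a b = u i a * u' i b * m i (basis_vec a) (basis_vec b) (x i)" for i a b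
    have "tensor_mult n B m (tprod n B u) (tprod n B u') x
        = (\<Sum>y\<in>Y. \<Sum>z\<in>Z. \<Prod>i\<in>{0..n}. H i (y i) (z i))"
      unfolding expand using YZ True
      by (intro sum.cong refl) (auto simp: tprod_def H_def prod.distrib subset_iff)
    also have "\<dots> = (\<Sum>y\<in>Y. \<Prod>i\<in>{0..n}. \<Sum>b\<in>supp (u' i). H i (y i) b)"
      unfolding Z_def using fin by (intro sum.cong refl prod_sum_PiE[symmetric]) auto
    also have "\<dots> = (\<Prod>i\<in>{0..n}. \<Sum>a\<in>supp (u i). \<Sum>b\<in>supp (u' i). H i a b)"
      unfolding Y_def using fin by (intro prod_sum_PiE[symmetric]) auto
    also have "\<dots> = (\<Prod>i\<in>{0..n}. m i (u i) (u' i) (x i))"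
      unfolding H_def using alg u u' by (intro prod.cong refl cplx_algebra_basis_expansion[symmetric])
    also have "\<dots> = tprod n B (\<lambda>i. m i (u i) (u' i)) x"
      using True by (simp add: tprod_def)
    finally show ?thesis .
  qed
qed

section \<open>Contracting local vectors\<close>

definition contraction ::
  "nat \<Rightarrow> (nat set \<Rightarrow> nat) \<Rightarrow> (nat \<Rightarrow> 'b set) \<Rightarrow> nat set
     \<Rightarrow> (nat \<Rightarrow> (nat set \<times> nat \<Rightarrow> nat) \<Rightarrow> 'b \<Rightarrow> complex) \<Rightarrow> (nat \<Rightarrow> 'b) \<Rightarrow> complex" where
  "contraction n \<Omega> B I loc = (\<lambda>x. \<Sum>\<alpha>\<in>mfacets n \<Omega> \<rightarrow>\<^sub>E I.
     tprod n B (\<lambda>i. loc i (restrict \<alpha> (mfacets_at n \<Omega> i))) x)"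

definition in_local_spaces ::
  "nat \<Rightarrow> (nat set \<Rightarrow> nat) \<Rightarrow> (nat \<Rightarrow> 'b set) \<Rightarrow> nat set
     \<Rightarrow> (nat \<Rightarrow> (nat set \<times> nat \<Rightarrow> nat) \<Rightarrow> 'b \<Rightarrow> complex) \<Rightarrow> bool" where
  "in_local_spaces n \<Omega> B I loc \<longleftrightarrow>
     (\<forall>i\<in>{0..n}. \<forall>\<beta>\<in>mfacets_at n \<Omega> i \<rightarrow>\<^sub>E I. loc i \<beta> \<in> loc_space (B i))"

definition map_labels ::
  "nat \<Rightarrow> (nat set \<Rightarrow> nat) \<Rightarrow> (nat \<Rightarrow> nat) \<Rightarrow> (nat \<Rightarrow> (nat set \<times> nat \<Rightarrow> nat) \<Rightarrow> 'v)
     \<Rightarrow> nat \<Rightarrow> (nat set \<times> nat \<Rightarrow> nat) \<Rightarrow> 'v" where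
  "map_labels n \<Omega> h loc i \<beta> = loc i (\<lambda>y\<in>mfacets_at n \<Omega> i. h (\<beta> y))"

definition add_locals ::
  "nat \<Rightarrow> (nat set \<Rightarrow> nat) \<Rightarrow> nat set \<Rightarrow> nat set
     \<Rightarrow> (nat \<Rightarrow> (nat set \<times> nat \<Rightarrow> nat) \<Rightarrow> 'b \<Rightarrow> complex)
     \<Rightarrow> (nat \<Rightarrow> (nat set \<times> nat \<Rightarrow> nat) \<Rightarrow> 'b \<Rightarrow> complex)
     \<Rightarrow> nat \<Rightarrow> (nat set \<times> nat \<Rightarrow> nat) \<Rightarrow> 'b \<Rightarrow> complex" where
  "add_locals n \<Omega> I J lv lw i \<beta> =
     (if \<beta> \<in> mfacets_at n \<Omega> i \<rightarrow>\<^sub>E I then lv i \<beta>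
      else if \<beta> \<in> mfacets_at n \<Omega> i \<rightarrow>\<^sub>E J then lw i \<beta> else (\<lambda>_. 0))"

text \<open>Index sets are sets of naturals, so pairs of indices are encoded by prod_encode.\<close>
definition mult_locals ::
  "nat \<Rightarrow> (nat set \<Rightarrow> nat) \<Rightarrow> (nat \<Rightarrow> ('b \<Rightarrow> complex) \<Rightarrow> ('b \<Rightarrow> complex) \<Rightarrow> 'b \<Rightarrow> complex)
     \<Rightarrow> (nat \<Rightarrow> (nat set \<times> nat \<Rightarrow> nat) \<Rightarrow> 'b \<Rightarrow> complex)
     \<Rightarrow> (nat \<Rightarrow> (nat set \<times> nat \<Rightarrow> nat) \<Rightarrow> 'b \<Rightarrow> complex)
     \<Rightarrow> nat \<Rightarrow> (nat set \<times> nat \<Rightarrow> nat) \<Rightarrow> 'b \<Rightarrow> complex" where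
  "mult_locals n \<Omega> m lv lw i \<beta> =
     m i (map_labels n \<Omega> (fst \<circ> prod_decode) lv i \<beta>) (map_labels n \<Omega> (snd \<circ> prod_decode) lw i \<beta>)"

lemma in_local_spaces_map_labels:
  assumes "in_local_spaces n \<Omega> B I loc" and "\<And>k. k \<in> K \<Longrightarrow> h k \<in> I"
  shows "in_local_spaces n \<Omega> B K (map_labels n \<Omega> h loc)"
  unfolding in_local_spaces_def map_labels_def
proof (intro ballI)
  fix i \<beta>
  assume "i \<in> {0..n}" and "\<beta> \<in> mfacets_at n \<Omega> i \<rightarrow>\<^sub>E K"
  moreover from this have "(\<lambda>y\<in>mfacets_at n \<Omega> i. h (\<beta> y)) \<in> mfacets_at n \<Omega> i \<rightarrow>\<^sub>E I"
    using assms(2) by auto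
  ultimately show "loc i (\<lambda>y\<in>mfacets_at n \<Omega> i. h (\<beta> y)) \<in> loc_space (B i)"
    using assms(1) by (simp add: in_local_spaces_def)
qed

lemma in_local_spaces_add_locals:
  assumes "in_local_spaces n \<Omega> B I lv" and "in_local_spaces n \<Omega> B J lw"
  shows "in_local_spaces n \<Omega> B K (add_locals n \<Omega> I J lv lw)"
  using assms by (simp add: in_local_spaces_def add_locals_def loc_space_zero)

lemma in_local_spaces_mult_locals:
  assumes alg: "\<And>i. i \<in> {0..n} \<Longrightarrow> cplx_algebra (loc_space (B i)) (m i)"
    and lv: "in_local_spaces n \<Omega> B I lv" and lw: "in_local_spaces n \<Omega> B J lw"
  shows "in_local_spaces n \<Omega> B (prod_encode ` (I \<times> J)) (mult_locals n \<Omega> m lv lw)"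
proof -
  have "in_local_spaces n \<Omega> B (prod_encode ` (I \<times> J)) (map_labels n \<Omega> (fst \<circ> prod_decode) lv)"
    "in_local_spaces n \<Omega> B (prod_encode ` (I \<times> J)) (map_labels n \<Omega> (snd \<circ> prod_decode) lw)"
    using lv lw by (auto intro!: in_local_spaces_map_labels)
  then show ?thesis
    using alg by (simp add: in_local_spaces_def mult_locals_def cplx_algebra_def)
qed

lemma contraction_relabel:
  assumes inj: "inj_on f I"
  shows "contraction n \<Omega> B (f ` I) (map_labels n \<Omega> (inv_into I f) loc) = contraction n \<Omega> B I loc"
proof
  fix x
  let ?F = "mfacets n \<Omega>"
  show "contraction n \<Omega> B (f ` I) (map_labels n \<Omega> (inv_into I f) loc) x = contraction n \<Omega> B I loc x"
    unfolding contraction_def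
  proof (rule sum.reindex_bij_witness[where j = "\<lambda>\<alpha>. \<lambda>y\<in>?F. inv_into I f (\<alpha> y)"
        and i = "\<lambda>a. \<lambda>y\<in>?F. f (a y)"])
    fix \<alpha>
    assume \<alpha>: "\<alpha> \<in> ?F \<rightarrow>\<^sub>E f ` I"
    then show "(\<lambda>y\<in>?F. f ((\<lambda>y\<in>?F. inv_into I f (\<alpha> y)) y)) = \<alpha>"
      by (auto simp: f_inv_into_f PiE_iff extensional_def)
    show "(\<lambda>y\<in>?F. inv_into I f (\<alpha> y)) \<in> ?F \<rightarrow>\<^sub>E I"
      using \<alpha> by (simp add: PiE_iff inv_into_into)
    show "tprod n B (\<lambda>i. loc i (restrict (\<lambda>y\<in>?F. inv_into I f (\<alpha> y)) (mfacets_at n \<Omega> i))) x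
        = tprod n B (\<lambda>i. map_labels n \<Omega> (inv_into I f) loc i (restrict \<alpha> (mfacets_at n \<Omega> i))) x"
    proof -
      have "restrict (\<lambda>y\<in>?F. inv_into I f (\<alpha> y)) (mfacets_at n \<Omega> i)
          = (\<lambda>y\<in>mfacets_at n \<Omega> i. inv_into I f (restrict \<alpha> (mfacets_at n \<Omega> i) y))" for i
        using mfacets_at_subset by (intro restrict_ext) auto
      then show ?thesis
        by (simp add: map_labels_def)
    qed
  next
    fix a
    assume a: "a \<in> ?F \<rightarrow>\<^sub>E I"
    then show "(\<lambda>y\<in>?F. inv_into I f ((\<lambda>y\<in>?F. f (a y)) y)) = a"
      using inj by (auto simp: PiE_iff extensional_def)
    show "(\<lambda>y\<in>?F. f (a y)) \<in> ?F \<rightarrow>\<^sub>E f ` I"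
      using a by auto
  qed
qed

lemma contraction_add_locals:
  assumes wsc: "wsc n \<Omega>" and conn: "wsc_connected n \<Omega>"
    and fin: "finite I" "finite J" and disjoint: "I \<inter> J = {}"
  shows "contraction n \<Omega> B (I \<union> J) (add_locals n \<Omega> I J lv lw)
    = (\<lambda>x. contraction n \<Omega> B I lv x + contraction n \<Omega> B J lw x)"
proof
  fix x
  let ?F = "mfacets n \<Omega>" and ?at = "mfacets_at n \<Omega>"
  let ?term = "\<lambda>loc \<alpha>. tprod n B (\<lambda>i. loc i (restrict \<alpha> (?at i))) x"
  let ?loc = "add_locals n \<Omega> I J lv lw"
  have on_I: "?term ?loc \<alpha> = ?term lv \<alpha>" if "\<alpha> \<in> ?F \<rightarrow>\<^sub>E I" for \<alpha>
  proof -
    have "?loc i (restrict \<alpha> (?at i)) = lv i (restrict \<alpha> (?at i))" for i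
      unfolding add_locals_def by (simp only: if_P[OF restrict_mfacets_at_PiE[OF that]])
    then show ?thesis
      by simp
  qed
  have on_J: "?term ?loc \<alpha> = ?term lw \<alpha>" if \<alpha>: "\<alpha> \<in> ?F \<rightarrow>\<^sub>E J" for \<alpha>
  proof -
    have "?loc i (restrict \<alpha> (?at i)) = lw i (restrict \<alpha> (?at i))" if i: "i \<in> {0..n}" for i
    proof -
      obtain y where "y \<in> ?at i"
        using mfacets_at_nonempty[OF wsc i] by blast
      then have not_I: "restrict \<alpha> (?at i) \<notin> ?at i \<rightarrow>\<^sub>E I"
        using \<alpha> disjoint mfacets_at_subset by fastforce
      show ?thesis
        unfolding add_locals_def
        by (simp only: if_not_P[OF not_I] if_P[OF restrict_mfacets_at_PiE[OF \<alpha>]])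
    qed
    then show ?thesis
      using tprod_cong[of n "\<lambda>i. ?loc i (restrict \<alpha> (?at i))"] by simp
  qed
  have mixed: "?term ?loc \<alpha> = 0"
    if "\<alpha> \<in> ?F \<rightarrow>\<^sub>E (I \<union> J)" and "\<alpha> \<notin> ?F \<rightarrow>\<^sub>E I" and "\<alpha> \<notin> ?F \<rightarrow>\<^sub>E J" for \<alpha>
  proof -
    have "\<not> ((\<forall>y\<in>?F. \<alpha> y \<in> I) \<or> (\<forall>y\<in>?F. \<alpha> y \<notin> I))"
      using that by (auto simp: PiE_iff)
    then obtain i where i: "i \<in> {0..n}"
      and "\<not> ((\<forall>y\<in>?at i. \<alpha> y \<in> I) \<or> (\<forall>y\<in>?at i. \<alpha> y \<notin> I))"
      using wsc_connected_all_or_none[OF wsc conn, of "\<lambda>y. \<alpha> y \<in> I"] by blast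
    then have "?loc i (restrict \<alpha> (?at i)) = (\<lambda>_. 0)"
      using disjoint by (auto simp: add_locals_def)
    then have "tprod n B (\<lambda>i. ?loc i (restrict \<alpha> (?at i))) = (\<lambda>_. 0)"
      by (rule tprod_eq_0[OF i])
    then show ?thesis
      by simp
  qed
  have finite_PiE_F: "finite (?F \<rightarrow>\<^sub>E K)" if "finite K" for K :: "nat set"
    using that finite_mfacets by (intro finite_PiE) auto
  have disjoint_PiE: "(?F \<rightarrow>\<^sub>E I) \<inter> (?F \<rightarrow>\<^sub>E J) = {}"
    using mfacets_nonempty[OF wsc] disjoint by (fastforce simp: PiE_iff)
  have "contraction n \<Omega> B (I \<union> J) ?loc x = (\<Sum>\<alpha>\<in>(?F \<rightarrow>\<^sub>E I) \<union> (?F \<rightarrow>\<^sub>E J). ?term ?loc \<alpha>)"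
    unfolding contraction_def using fin mixed finite_PiE_F
    by (intro sum.mono_neutral_right) (auto intro: PiE_mono[THEN subsetD])
  also have "\<dots> = (\<Sum>\<alpha>\<in>?F \<rightarrow>\<^sub>E I. ?term ?loc \<alpha>) + (\<Sum>\<alpha>\<in>?F \<rightarrow>\<^sub>E J. ?term ?loc \<alpha>)"
    using fin finite_PiE_F disjoint_PiE by (intro sum.union_disjoint) auto
  also have "\<dots> = contraction n \<Omega> B I lv x + contraction n \<Omega> B J lw x"
    using on_I on_J by (simp add: contraction_def)
  finally show "contraction n \<Omega> B (I \<union> J) ?loc x = contraction n \<Omega> B I lv x + contraction n \<Omega> B J lw x" .
qed

lemma contraction_mult_locals:
  assumes alg: "\<And>i. i \<in> {0..n} \<Longrightarrow> cplx_algebra (loc_space (B i)) (m i)"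
    and fin: "finite I" "finite J"
    and lv: "in_local_spaces n \<Omega> B I lv" and lw: "in_local_spaces n \<Omega> B J lw"
  shows "tensor_mult n B m (contraction n \<Omega> B I lv) (contraction n \<Omega> B J lw)
    = contraction n \<Omega> B (prod_encode ` (I \<times> J)) (mult_locals n \<Omega> m lv lw)"
proof
  fix x
  let ?F = "mfacets n \<Omega>" and ?at = "mfacets_at n \<Omega>"
  let ?V = "\<lambda>a. tprod n B (\<lambda>i. lv i (restrict a (?at i)))"
  let ?W = "\<lambda>c. tprod n B (\<lambda>i. lw i (restrict c (?at i)))"
  let ?pair = "\<lambda>(a, c). \<lambda>y\<in>?F. prod_encode (a y, c y)"
  have local_a: "lv i (restrict a (?at i)) \<in> loc_space (B i)" if "a \<in> ?F \<rightarrow>\<^sub>E I" "i \<in> {0..n}" for a i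
    using lv restrict_mfacets_at_PiE[OF that(1)] that(2) by (simp add: in_local_spaces_def)
  have local_c: "lw i (restrict c (?at i)) \<in> loc_space (B i)" if "c \<in> ?F \<rightarrow>\<^sub>E J" "i \<in> {0..n}" for c i
    using lw restrict_mfacets_at_PiE[OF that(1)] that(2) by (simp add: in_local_spaces_def)
  have "tensor_mult n B m (contraction n \<Omega> B I lv) (contraction n \<Omega> B J lw) x
      = (\<Sum>a\<in>?F \<rightarrow>\<^sub>E I. \<Sum>c\<in>?F \<rightarrow>\<^sub>E J. tensor_mult n B m (?V a) (?W c) x)"
    unfolding contraction_def using fin finite_mfacets
    by (intro tensor_mult_sum finite_PiE finite_supp_tprod local_a local_c) auto
  also have "\<dots> = (\<Sum>(a, c)\<in>(?F \<rightarrow>\<^sub>E I) \<times> (?F \<rightarrow>\<^sub>E J).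
      tprod n B (\<lambda>i. m i (lv i (restrict a (?at i))) (lw i (restrict c (?at i)))) x)"
  proof -
    have "tensor_mult n B m (?V a) (?W c)
        = tprod n B (\<lambda>i. m i (lv i (restrict a (?at i))) (lw i (restrict c (?at i))))"
      if "a \<in> ?F \<rightarrow>\<^sub>E I" and "c \<in> ?F \<rightarrow>\<^sub>E J" for a c
      using that by (intro tensor_mult_tprod alg local_a local_c)
    then show ?thesis
      unfolding sum.cartesian_product[symmetric] by simp
  qed
  also have "\<dots> = contraction n \<Omega> B (prod_encode ` (I \<times> J)) (mult_locals n \<Omega> m lv lw) x"
    unfolding contraction_def
  proof (rule sum.reindex_bij_witness[where j = ?pair
        and i = "\<lambda>\<alpha>. (\<lambda>y\<in>?F. fst (prod_decode (\<alpha> y)), \<lambda>y\<in>?F. snd (prod_decode (\<alpha> y)))"])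
    fix p
    assume "p \<in> (?F \<rightarrow>\<^sub>E I) \<times> (?F \<rightarrow>\<^sub>E J)"
    then obtain a c where p: "p = (a, c)" and a: "a \<in> ?F \<rightarrow>\<^sub>E I" and c: "c \<in> ?F \<rightarrow>\<^sub>E J"
      by blast
    show "(\<lambda>y\<in>?F. fst (prod_decode (?pair p y)), \<lambda>y\<in>?F. snd (prod_decode (?pair p y))) = p"
      using a c by (auto simp: p PiE_iff extensional_def)
    show "?pair p \<in> ?F \<rightarrow>\<^sub>E prod_encode ` (I \<times> J)"
      using a c by (auto simp: p)
    have "restrict (?pair p) (?at i) = (\<lambda>y\<in>?at i. prod_encode (a y, c y))" for i
      using mfacets_at_subset[of n \<Omega> i] by (simp add: p Int_absorb1)
    moreover have "mult_locals n \<Omega> m lv lw i (\<lambda>y\<in>?at i. prod_encode (a y, c y))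
        = m i (lv i (restrict a (?at i))) (lw i (restrict c (?at i)))" for i
      unfolding mult_locals_def map_labels_def by (simp cong: restrict_cong)
    ultimately show "tprod n B (\<lambda>i. mult_locals n \<Omega> m lv lw i (restrict (?pair p) (?at i))) x
        = (case p of (a, c) \<Rightarrow>
            tprod n B (\<lambda>i. m i (lv i (restrict a (?at i))) (lw i (restrict c (?at i)))) x)"
      by (simp add: p)
  next
    fix \<alpha>
    assume \<alpha>: "\<alpha> \<in> ?F \<rightarrow>\<^sub>E prod_encode ` (I \<times> J)"
    then show "?pair (\<lambda>y\<in>?F. fst (prod_decode (\<alpha> y)), \<lambda>y\<in>?F. snd (prod_decode (\<alpha> y))) = \<alpha>"
      by (auto simp: PiE_iff extensional_def)
    show "(\<lambda>y\<in>?F. fst (prod_decode (\<alpha> y)), \<lambda>y\<in>?F. snd (prod_decode (\<alpha> y)))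
        \<in> (?F \<rightarrow>\<^sub>E I) \<times> (?F \<rightarrow>\<^sub>E J)"
    proof -
      have "prod_decode (\<alpha> y) \<in> I \<times> J" if "y \<in> ?F" for y
        using \<alpha> that by (auto simp: PiE_iff)
      then show ?thesis
        by (auto simp: mem_Times_iff)
    qed
  qed
  finally show "tensor_mult n B m (contraction n \<Omega> B I lv) (contraction n \<Omega> B J lw) x
    = contraction n \<Omega> B (prod_encode ` (I \<times> J)) (mult_locals n \<Omega> m lv lw) x" .
qed

section \<open>Equivariance and the rank inequalities\<close>

lemma decomp_rank_le:
  "is_decomp n \<Omega> G \<phi> \<psi> B v I loc \<Longrightarrow> decomp_rank n \<Omega> G \<phi> \<psi> B v \<le> enat (card I)"
  unfolding decomp_rank_def by (rule INF_lower2[of I]) auto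

lemma decomp_rank_attained:
  assumes "decomp_rank n \<Omega> G \<phi> \<psi> B v \<noteq> \<infinity>"
  obtains I loc where "is_decomp n \<Omega> G \<phi> \<psi> B v I loc"
    and "decomp_rank n \<Omega> G \<phi> \<psi> B v = enat (card I)"
proof -
  let ?ranks = "(\<lambda>I. enat (card I)) ` {I. \<exists>loc. is_decomp n \<Omega> G \<phi> \<psi> B v I loc}"
  have "decomp_rank n \<Omega> G \<phi> \<psi> B v = Inf ?ranks"
    by (simp add: decomp_rank_def)
  moreover have "?ranks \<noteq> {}"
    using assms calculation by (metis Inf_empty top_enat_def)
  ultimately have "decomp_rank n \<Omega> G \<phi> \<psi> B v \<in> ?ranks"
    using wellorder_InfI by (metis ex_in_conv)
  then show ?thesis
    using that by blast
qed

lemma decomp_rank_eq_0D: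
  assumes "wsc n \<Omega>" and "decomp_rank n \<Omega> G \<phi> \<psi> B v = 0"
  shows "v = (\<lambda>_. 0)"
proof -
  obtain I loc where decomp: "is_decomp n \<Omega> G \<phi> \<psi> B v I loc" and "enat (card I) = 0"
    using decomp_rank_attained[of n \<Omega> G \<phi> \<psi> B v] assms(2) by (metis zero_enat_def infinity_ne_i0)
  moreover have "finite I"
    using decomp unfolding is_decomp_def by blast
  ultimately have "I = {}"
    by (simp add: zero_enat_def)
  then have "mfacets n \<Omega> \<rightarrow>\<^sub>E I = {}"
    using mfacets_nonempty[OF assms(1)] by (meson PiE_eq_empty_iff ex_in_conv)
  moreover have "v = contraction n \<Omega> B I loc"
    using decomp unfolding is_decomp_def contraction_def by blast
  ultimately show ?thesis
    by (simp add: contraction_def)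
qed

locale wsc_group_action =
  fixes n :: nat and \<Omega> :: "nat set \<Rightarrow> nat" and G :: "('g, 'm) monoid_scheme"
    and \<phi> :: "'g \<Rightarrow> nat \<Rightarrow> nat" and \<psi> :: "'g \<Rightarrow> nat set \<times> nat \<Rightarrow> nat set \<times> nat"
  assumes wsc: "wsc n \<Omega>" and action: "wsc_action n \<Omega> G \<phi> \<psi>"
begin

lemma vertex_action: "group_action G {0..n} \<phi>"
  using action by (simp add: wsc_action_def)

lemma facet_action: "group_action G (mfacets n \<Omega>) \<psi>"
  using action by (simp add: wsc_action_def)

lemma inv_closed: "g \<in> carrier G \<Longrightarrow> inv\<^bsub>G\<^esub> g \<in> carrier G"
  by (rule group.inv_closed[OF group_hom.axioms(1)[OF group_action.group_hom[OF vertex_action]]])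

lemma facet_action_at:
  assumes g: "g \<in> carrier G" and y: "y \<in> mfacets_at n \<Omega> j"
  shows "\<psi> g y \<in> mfacets_at n \<Omega> (\<phi> g j)"
proof -
  have y_facet: "y \<in> mfacets n \<Omega>" and j: "j \<in> fst y"
    using y by (auto simp: mfacets_at_def)
  have "\<psi> g y \<in> mfacets n \<Omega>"
    by (rule group_action.element_image[OF facet_action g y_facet refl])
  moreover have "fst (\<psi> g y) = \<phi> g ` fst y"
    using action g y_facet unfolding wsc_action_def by blast
  ultimately show ?thesis
    using j by (simp add: mfacets_at_def)
qed

lemma image_inv_mfacets_at:
  assumes g: "g \<in> carrier G" and i: "i \<in> {0..n}"
  shows "\<psi> (inv\<^bsub>G\<^esub> g) ` mfacets_at n \<Omega> (\<phi> g i) = mfacets_at n \<Omega> i"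
proof
  show "\<psi> (inv\<^bsub>G\<^esub> g) ` mfacets_at n \<Omega> (\<phi> g i) \<subseteq> mfacets_at n \<Omega> i"
  proof
    fix y
    assume "y \<in> \<psi> (inv\<^bsub>G\<^esub> g) ` mfacets_at n \<Omega> (\<phi> g i)"
    then obtain x where "x \<in> mfacets_at n \<Omega> (\<phi> g i)" and y: "y = \<psi> (inv\<^bsub>G\<^esub> g) x"
      by blast
    then have "y \<in> mfacets_at n \<Omega> (\<phi> (inv\<^bsub>G\<^esub> g) (\<phi> g i))"
      using facet_action_at[OF inv_closed[OF g]] by blast
    then show "y \<in> mfacets_at n \<Omega> i"
      by (simp only: group_action.orbit_sym_aux[OF vertex_action g i refl])
  qed
  show "mfacets_at n \<Omega> i \<subseteq> \<psi> (inv\<^bsub>G\<^esub> g) ` mfacets_at n \<Omega> (\<phi> g i)"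
  proof
    fix y
    assume y: "y \<in> mfacets_at n \<Omega> i"
    then have "y = \<psi> (inv\<^bsub>G\<^esub> g) (\<psi> g y)"
      using group_action.orbit_sym_aux[OF facet_action g _ refl] by (simp add: mfacets_at_def)
    then show "y \<in> \<psi> (inv\<^bsub>G\<^esub> g) ` mfacets_at n \<Omega> (\<phi> g i)"
      using facet_action_at[OF g y] by blast
  qed
qed

definition label_shift :: "'g \<Rightarrow> nat \<Rightarrow> (nat set \<times> nat \<Rightarrow> nat) \<Rightarrow> nat set \<times> nat \<Rightarrow> nat" where
  "label_shift g i \<beta> = (\<lambda>x\<in>mfacets_at n \<Omega> (\<phi> g i). \<beta> (\<psi> (inv\<^bsub>G\<^esub> g) x))"

definition equivariant :: "nat set \<Rightarrow> (nat \<Rightarrow> (nat set \<times> nat \<Rightarrow> nat) \<Rightarrow> 'v) \<Rightarrow> bool" where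
  "equivariant I loc \<longleftrightarrow> (\<forall>i\<in>{0..n}. \<forall>g\<in>carrier G. \<forall>\<beta>\<in>mfacets_at n \<Omega> i \<rightarrow>\<^sub>E I.
     loc i \<beta> = loc (\<phi> g i) (label_shift g i \<beta>))"

lemma is_decomp_iff:
  "is_decomp n \<Omega> G \<phi> \<psi> B v I loc \<longleftrightarrow>
     finite I \<and> in_local_spaces n \<Omega> B I loc \<and> v = contraction n \<Omega> B I loc \<and> equivariant I loc"
  unfolding is_decomp_def in_local_spaces_def contraction_def equivariant_def label_shift_def ..

lemma label_shift_map:
  assumes "g \<in> carrier G" and "i \<in> {0..n}"
  shows "(\<lambda>y\<in>mfacets_at n \<Omega> (\<phi> g i). h (label_shift g i \<beta> y))
    = label_shift g i (\<lambda>y\<in>mfacets_at n \<Omega> i. h (\<beta> y))"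
  using image_inv_mfacets_at[OF assms] unfolding label_shift_def by (intro restrict_ext) auto

lemma label_shift_PiE_iff:
  assumes g: "g \<in> carrier G" and i: "i \<in> {0..n}" and \<beta>: "\<beta> \<in> extensional (mfacets_at n \<Omega> i)"
  shows "label_shift g i \<beta> \<in> mfacets_at n \<Omega> (\<phi> g i) \<rightarrow>\<^sub>E I \<longleftrightarrow> \<beta> \<in> mfacets_at n \<Omega> i \<rightarrow>\<^sub>E I"
proof -
  have "label_shift g i \<beta> \<in> mfacets_at n \<Omega> (\<phi> g i) \<rightarrow>\<^sub>E I
      \<longleftrightarrow> (\<forall>y\<in>\<psi> (inv\<^bsub>G\<^esub> g) ` mfacets_at n \<Omega> (\<phi> g i). \<beta> y \<in> I)"
    by (simp add: label_shift_def Pi_iff)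
  then show ?thesis
    using \<beta> by (simp add: image_inv_mfacets_at[OF g i] PiE_iff)
qed

lemma equivariant_map_labels:
  assumes eq: "equivariant I loc" and h: "\<And>k. k \<in> K \<Longrightarrow> h k \<in> I"
  shows "equivariant K (map_labels n \<Omega> h loc)"
  unfolding equivariant_def
proof (intro ballI)
  fix i g \<beta>
  assume i: "i \<in> {0..n}" and g: "g \<in> carrier G" and \<beta>: "\<beta> \<in> mfacets_at n \<Omega> i \<rightarrow>\<^sub>E K"
  then have "(\<lambda>y\<in>mfacets_at n \<Omega> i. h (\<beta> y)) \<in> mfacets_at n \<Omega> i \<rightarrow>\<^sub>E I"
    using h by auto
  then have "loc i (\<lambda>y\<in>mfacets_at n \<Omega> i. h (\<beta> y))
      = loc (\<phi> g i) (label_shift g i (\<lambda>y\<in>mfacets_at n \<Omega> i. h (\<beta> y)))"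
    using eq i g unfolding equivariant_def by blast
  then show "map_labels n \<Omega> h loc i \<beta> = map_labels n \<Omega> h loc (\<phi> g i) (label_shift g i \<beta>)"
    unfolding map_labels_def label_shift_map[OF g i] .
qed

lemma equivariant_add_locals:
  assumes eq: "equivariant I lv" "equivariant J lw"
  shows "equivariant (I \<union> J) (add_locals n \<Omega> I J lv lw)"
  unfolding equivariant_def
proof (intro ballI)
  fix i g \<beta>
  assume i: "i \<in> {0..n}" and g: "g \<in> carrier G" and \<beta>: "\<beta> \<in> mfacets_at n \<Omega> i \<rightarrow>\<^sub>E I \<union> J"
  have "\<beta> \<in> extensional (mfacets_at n \<Omega> i)"
    using \<beta> by (simp add: PiE_iff)
  note I = label_shift_PiE_iff[OF g i this, of I] and J = label_shift_PiE_iff[OF g i this, of J]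
  have "\<beta> \<in> mfacets_at n \<Omega> i \<rightarrow>\<^sub>E I \<Longrightarrow> lv i \<beta> = lv (\<phi> g i) (label_shift g i \<beta>)"
    and "\<beta> \<in> mfacets_at n \<Omega> i \<rightarrow>\<^sub>E J \<Longrightarrow> lw i \<beta> = lw (\<phi> g i) (label_shift g i \<beta>)"
    using eq i g unfolding equivariant_def by blast+
  then show "add_locals n \<Omega> I J lv lw i \<beta> = add_locals n \<Omega> I J lv lw (\<phi> g i) (label_shift g i \<beta>)"
    unfolding add_locals_def I J by simp
qed

lemma equivariant_mult_locals:
  assumes m_inv: "\<And>g i a b. g \<in> carrier G \<Longrightarrow> i \<in> {0..n} \<Longrightarrow> a \<in> loc_space (B i) \<Longrightarrow>
      b \<in> loc_space (B i) \<Longrightarrow> m (\<phi> g i) a b = m i a b"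
    and lv: "in_local_spaces n \<Omega> B I lv" "equivariant I lv"
    and lw: "in_local_spaces n \<Omega> B J lw" "equivariant J lw"
  shows "equivariant (prod_encode ` (I \<times> J)) (mult_locals n \<Omega> m lv lw)"
proof -
  let ?K = "prod_encode ` (I \<times> J)"
  let ?lv = "map_labels n \<Omega> (fst \<circ> prod_decode) lv" and ?lw = "map_labels n \<Omega> (snd \<circ> prod_decode) lw"
  have labels: "(fst \<circ> prod_decode) k \<in> I" "(snd \<circ> prod_decode) k \<in> J" if "k \<in> ?K" for k
    using that by auto
  have eq: "equivariant ?K ?lv" "equivariant ?K ?lw"
    using labels by (auto intro!: equivariant_map_labels lv lw)
  have local: "in_local_spaces n \<Omega> B ?K ?lv" "in_local_spaces n \<Omega> B ?K ?lw"
    using labels by (auto intro!: in_local_spaces_map_labels lv lw)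
  show ?thesis
    unfolding equivariant_def
  proof (intro ballI)
    fix i g \<beta>
    assume i: "i \<in> {0..n}" and g: "g \<in> carrier G" and \<beta>: "\<beta> \<in> mfacets_at n \<Omega> i \<rightarrow>\<^sub>E ?K"
    have "?lv (\<phi> g i) (label_shift g i \<beta>) = ?lv i \<beta>" "?lw (\<phi> g i) (label_shift g i \<beta>) = ?lw i \<beta>"
      using eq i g \<beta> unfolding equivariant_def by (metis (no_types, lifting))+
    then have "mult_locals n \<Omega> m lv lw (\<phi> g i) (label_shift g i \<beta>) = m (\<phi> g i) (?lv i \<beta>) (?lw i \<beta>)"
      unfolding mult_locals_def by simp
    also have "\<dots> = mult_locals n \<Omega> m lv lw i \<beta>"
      using m_inv[OF g i] local i \<beta> unfolding mult_locals_def in_local_spaces_def by blast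
    finally show "mult_locals n \<Omega> m lv lw i \<beta> = mult_locals n \<Omega> m lv lw (\<phi> g i) (label_shift g i \<beta>)"
      by (rule sym)
  qed
qed

lemma is_decomp_relabel:
  assumes "is_decomp n \<Omega> G \<phi> \<psi> B v I loc" and inj: "inj_on f I"
  shows "is_decomp n \<Omega> G \<phi> \<psi> B v (f ` I) (map_labels n \<Omega> (inv_into I f) loc)"
proof -
  from assms(1) have fin: "finite I"
    and loc: "in_local_spaces n \<Omega> B I loc" "equivariant I loc" "v = contraction n \<Omega> B I loc"
    unfolding is_decomp_iff by blast+
  have labels: "\<And>k. k \<in> f ` I \<Longrightarrow> inv_into I f k \<in> I"
    by (rule inv_into_into)
  have "in_local_spaces n \<Omega> B (f ` I) (map_labels n \<Omega> (inv_into I f) loc)"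
    using loc(1) labels by (rule in_local_spaces_map_labels)
  moreover have "equivariant (f ` I) (map_labels n \<Omega> (inv_into I f) loc)"
    using loc(2) labels by (rule equivariant_map_labels)
  moreover have "v = contraction n \<Omega> B (f ` I) (map_labels n \<Omega> (inv_into I f) loc)"
    unfolding loc(3) contraction_relabel[OF inj] ..
  ultimately show ?thesis
    using fin by (simp add: is_decomp_iff)
qed

lemma is_decomp_add:
  assumes conn: "wsc_connected n \<Omega>"
    and "is_decomp n \<Omega> G \<phi> \<psi> B v I lv" and "is_decomp n \<Omega> G \<phi> \<psi> B w J lw"
    and disjoint: "I \<inter> J = {}"
  shows "is_decomp n \<Omega> G \<phi> \<psi> B (\<lambda>x. v x + w x) (I \<union> J) (add_locals n \<Omega> I J lv lw)"
proof -
  from assms(2,3) have fin: "finite I" "finite J"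
    and lv: "in_local_spaces n \<Omega> B I lv" "equivariant I lv" "v = contraction n \<Omega> B I lv"
    and lw: "in_local_spaces n \<Omega> B J lw" "equivariant J lw" "w = contraction n \<Omega> B J lw"
    unfolding is_decomp_iff by blast+
  have "in_local_spaces n \<Omega> B (I \<union> J) (add_locals n \<Omega> I J lv lw)"
    using lv(1) lw(1) by (rule in_local_spaces_add_locals)
  moreover have "equivariant (I \<union> J) (add_locals n \<Omega> I J lv lw)"
    using lv(2) lw(2) by (rule equivariant_add_locals)
  moreover have "(\<lambda>x. v x + w x) = contraction n \<Omega> B (I \<union> J) (add_locals n \<Omega> I J lv lw)"
    unfolding lv(3) lw(3) using wsc conn fin disjoint by (rule contraction_add_locals[symmetric])
  ultimately show ?thesis
    using fin by (simp add: is_decomp_iff)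
qed

lemma is_decomp_mult:
  assumes alg: "\<And>i. i \<in> {0..n} \<Longrightarrow> cplx_algebra (loc_space (B i)) (m i)"
    and m_inv: "\<And>g i a b. g \<in> carrier G \<Longrightarrow> i \<in> {0..n} \<Longrightarrow> a \<in> loc_space (B i) \<Longrightarrow>
      b \<in> loc_space (B i) \<Longrightarrow> m (\<phi> g i) a b = m i a b"
    and "is_decomp n \<Omega> G \<phi> \<psi> B v I lv" and "is_decomp n \<Omega> G \<phi> \<psi> B w J lw"
  shows "is_decomp n \<Omega> G \<phi> \<psi> B (tensor_mult n B m v w) (prod_encode ` (I \<times> J))
    (mult_locals n \<Omega> m lv lw)"
proof -
  from assms(3,4) have fin: "finite I" "finite J"
    and lv: "in_local_spaces n \<Omega> B I lv" "equivariant I lv" "v = contraction n \<Omega> B I lv"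
    and lw: "in_local_spaces n \<Omega> B J lw" "equivariant J lw" "w = contraction n \<Omega> B J lw"
    unfolding is_decomp_iff by blast+
  have "in_local_spaces n \<Omega> B (prod_encode ` (I \<times> J)) (mult_locals n \<Omega> m lv lw)"
    using alg lv(1) lw(1) by (rule in_local_spaces_mult_locals)
  moreover have "equivariant (prod_encode ` (I \<times> J)) (mult_locals n \<Omega> m lv lw)"
    using m_inv lv(1,2) lw(1,2) by (rule equivariant_mult_locals)
  moreover have "tensor_mult n B m v w = contraction n \<Omega> B (prod_encode ` (I \<times> J)) (mult_locals n \<Omega> m lv lw)"
    unfolding lv(3) lw(3) using alg fin lv(1) lw(1) by (rule contraction_mult_locals)
  ultimately show ?thesis
    using fin by (simp add: is_decomp_iff)
qed

lemma decomp_rank_add_le: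
  assumes conn: "wsc_connected n \<Omega>"
  shows "decomp_rank n \<Omega> G \<phi> \<psi> B (\<lambda>x. v x + w x)
    \<le> decomp_rank n \<Omega> G \<phi> \<psi> B v + decomp_rank n \<Omega> G \<phi> \<psi> B w"
proof (cases "decomp_rank n \<Omega> G \<phi> \<psi> B v = \<infinity> \<or> decomp_rank n \<Omega> G \<phi> \<psi> B w = \<infinity>")
  case True
  then show ?thesis
    by auto
next
  case False
  then have "decomp_rank n \<Omega> G \<phi> \<psi> B v \<noteq> \<infinity>" and "decomp_rank n \<Omega> G \<phi> \<psi> B w \<noteq> \<infinity>"
    by simp_all
  then obtain I lv J lw
    where v: "is_decomp n \<Omega> G \<phi> \<psi> B v I lv" "decomp_rank n \<Omega> G \<phi> \<psi> B v = enat (card I)"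
      and w: "is_decomp n \<Omega> G \<phi> \<psi> B w J lw" "decomp_rank n \<Omega> G \<phi> \<psi> B w = enat (card J)"
    by (elim decomp_rank_attained)
  define I' where "I' = (\<lambda>a. 2 * a) ` I"
  define J' where "J' = (\<lambda>b. 2 * b + 1) ` J"
  have inj: "inj_on (\<lambda>a. 2 * a :: nat) I" "inj_on (\<lambda>b. 2 * b + 1 :: nat) J"
    by (simp_all add: inj_on_def)
  have disjoint: "I' \<inter> J' = {}"
    unfolding I'_def J'_def by auto presburger
  obtain loc where "is_decomp n \<Omega> G \<phi> \<psi> B (\<lambda>x. v x + w x) (I' \<union> J') loc"
    using is_decomp_add[OF conn is_decomp_relabel[OF v(1) inj(1)] is_decomp_relabel[OF w(1) inj(2)]]
      disjoint unfolding I'_def J'_def by blast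
  moreover have "card (I' \<union> J') = card I + card J"
    using v(1) w(1) disjoint inj
    by (simp add: is_decomp_iff card_Un_disjoint I'_def J'_def card_image)
  ultimately show ?thesis
    using v(2) w(2) decomp_rank_le by (metis plus_enat_simps(1))
qed

lemma decomp_rank_mult_le:
  assumes alg: "\<And>i. i \<in> {0..n} \<Longrightarrow> cplx_algebra (loc_space (B i)) (m i)"
    and m_inv: "\<And>g i a b. g \<in> carrier G \<Longrightarrow> i \<in> {0..n} \<Longrightarrow> a \<in> loc_space (B i) \<Longrightarrow>
      b \<in> loc_space (B i) \<Longrightarrow> m (\<phi> g i) a b = m i a b"
  shows "decomp_rank n \<Omega> G \<phi> \<psi> B (tensor_mult n B m v w)
    \<le> decomp_rank n \<Omega> G \<phi> \<psi> B v * decomp_rank n \<Omega> G \<phi> \<psi> B w"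
proof -
  let ?rank = "decomp_rank n \<Omega> G \<phi> \<psi> B"
  consider (zero) "?rank v = 0 \<or> ?rank w = 0"
    | (infinite) "?rank v \<noteq> 0" "?rank w \<noteq> 0" "?rank v = \<infinity> \<or> ?rank w = \<infinity>"
    | (finite) "?rank v \<noteq> \<infinity>" "?rank w \<noteq> \<infinity>"
    by blast
  then show ?thesis
  proof cases
    case zero
    then obtain u where u: "u \<in> {v, w}" and rank_u: "?rank u = 0"
      by blast
    have "u = (\<lambda>_. 0)"
      using wsc rank_u by (rule decomp_rank_eq_0D)
    then have "tensor_mult n B m v w = u"
      using u by (auto simp: tensor_mult_def)
    then show ?thesis
      using rank_u by simp
  next
    case infinite
    then have "?rank v * ?rank w = \<infinity>"
      by (simp add: imult_is_infinity)
    then show ?thesis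
      by simp
  next
    case finite
    then obtain I lv J lw
      where v: "is_decomp n \<Omega> G \<phi> \<psi> B v I lv" "?rank v = enat (card I)"
        and w: "is_decomp n \<Omega> G \<phi> \<psi> B w J lw" "?rank w = enat (card J)"
      by (elim decomp_rank_attained)
    have "card (prod_encode ` (I \<times> J)) = card I * card J"
      by (simp add: card_image inj_prod_encode card_cartesian_product)
    moreover have "is_decomp n \<Omega> G \<phi> \<psi> B (tensor_mult n B m v w) (prod_encode ` (I \<times> J))
        (mult_locals n \<Omega> m lv lw)"
      using alg m_inv v(1) w(1) by (rule is_decomp_mult)
    ultimately show ?thesis
      using decomp_rank_le v(2) w(2) by (metis times_enat_simps(1))
  qed
qed

end

theorem proposition3p9:
  fixes n :: nat and \<Omega> :: "nat set \<Rightarrow> nat"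
    and G :: "('g, 'm) monoid_scheme" and \<phi> :: "'g \<Rightarrow> nat \<Rightarrow> nat"
    and \<psi> :: "'g \<Rightarrow> (nat set \<times> nat) \<Rightarrow> (nat set \<times> nat)"
    and B :: "nat \<Rightarrow> 'b set"
  assumes "wsc n \<Omega>"
    and "wsc_connected n \<Omega>"
    and "wsc_action n \<Omega> G \<phi> \<psi>"
    and "\<forall>g\<in>carrier G. \<forall>i\<in>{0..n}. B (\<phi> g i) = B i"
  shows "(\<forall>v\<in>tensor_space n B. \<forall>w\<in>tensor_space n B.
            decomp_rank n \<Omega> G \<phi> \<psi> B (\<lambda>x. v x + w x)
              \<le> decomp_rank n \<Omega> G \<phi> \<psi> B v + decomp_rank n \<Omega> G \<phi> \<psi> B w) \<and>
         (\<forall>m. (\<forall>i\<in>{0..n}. cplx_algebra (loc_space (B i)) (m i)) \<and>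
              (\<forall>g\<in>carrier G. \<forall>i\<in>{0..n}. \<forall>a\<in>loc_space (B i). \<forall>b\<in>loc_space (B i).
                  m (\<phi> g i) a b = m i a b) \<longrightarrow>
            (\<forall>v\<in>tensor_space n B. \<forall>w\<in>tensor_space n B.
               decomp_rank n \<Omega> G \<phi> \<psi> B (tensor_mult n B m v w)
                 \<le> decomp_rank n \<Omega> G \<phi> \<psi> B v * decomp_rank n \<Omega> G \<phi> \<psi> B w))"
proof -
  interpret wsc_group_action n \<Omega> G \<phi> \<psi>
    using assms(1,3) by unfold_locales
  show ?thesis
  proof (intro conjI allI impI ballI)
    fix v w :: "(nat \<Rightarrow> 'b) \<Rightarrow> complex"
    show "decomp_rank n \<Omega> G \<phi> \<psi> B (\<lambda>x. v x + w x)
      \<le> decomp_rank n \<Omega> G \<phi> \<psi> B v + decomp_rank n \<Omega> G \<phi> \<psi> B w"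
      by (rule decomp_rank_add_le[OF assms(2)])
  next
    fix m and v w :: "(nat \<Rightarrow> 'b) \<Rightarrow> complex"
    assume "(\<forall>i\<in>{0..n}. cplx_algebra (loc_space (B i)) (m i)) \<and>
      (\<forall>g\<in>carrier G. \<forall>i\<in>{0..n}. \<forall>a\<in>loc_space (B i). \<forall>b\<in>loc_space (B i).
        m (\<phi> g i) a b = m i a b)"
    then show "decomp_rank n \<Omega> G \<phi> \<psi> B (tensor_mult n B m v w)
      \<le> decomp_rank n \<Omega> G \<phi> \<psi> B v * decomp_rank n \<Omega> G \<phi> \<psi> B w"
      by (intro decomp_rank_mult_le) blast+
  qed
qed

end
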